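(* Let $\mathcal Q$ be a quadrangle in $K^2$. The bisector locus of $\mathcal Q$ is the conic through the three diagonal points and the six midpoints of $\mathcal Q$ (diagonal points at infinity being understood as points at infinity of the conic), and hence is the nine-point conic of $\mathcal Q$.
   Context: $K$ is a field of characteristic $\neq 2$; we work in $K^2$ inside the projective plane. A quadrangle $\mathcal Q$ consists of four distinct points of $K^2$ (its vertices) and the six lines through pairs of them (its sides); two sides are opposite if they have no common vertex, giving three pairs of opposite sides. The diagonal points of $\mathcal Q$ are the three intersection points (possibly at infinity) of pairs of opposite sides; the midpoints of $\mathcal Q$ are the six midpoints of pairs of vertices. The nine-point conic of $\mathcal Q$ is the unique conic passing through these nine points. A line $\ell$ crosses a pair of lines $\{\ell_1,\ell_2\}$ if it is distinct from both and not parallel to both; $\mathrm{mid}_{\{\ell_1,\ell_2\}}(\ell)$ is the midpoint of the points where $\ell$ meets $\ell_1,\ell_2$ (or the point at infinity of $\ell$ if one of these is at infinity). A line $\ell$ bisects $\mathcal Q$ if $\mathrm{mid}_{\mathsf P}(\ell)$ is the same for all pairs $\mathsf P$ of opposite sides of $\mathcal Q$ that $\ell$ crosses; this common point is the midpoint of the bisector. The bisector locus of $\mathcal Q$ is the set of midpoints of the bisectors of $\mathcal Q$. *)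

theory Defs
  imports Main
begin

(* Affine points of K^2 and homogeneous coordinates of the projective plane over K.
   The field K is a type 'a :: field; characteristic \<noteq> 2 is the hypothesis 2 \<noteq> 0. *)
type_synonym 'a pt = "'a \<times> 'a"
type_synonym 'a hpt = "'a \<times> 'a \<times> 'a"

definition hom :: "'a::field pt \<Rightarrow> 'a hpt" where
  "hom p = (fst p, snd p, 1)"

definition hscale :: "'a::field \<Rightarrow> 'a hpt \<Rightarrow> 'a hpt" where
  "hscale k X = (case X of (x, y, z) \<Rightarrow> (k * x, k * y, k * z))"

definition proj_eq :: "'a::field hpt \<Rightarrow> 'a hpt \<Rightarrow> bool" where
  "proj_eq X Y \<longleftrightarrow> X \<noteq> (0, 0, 0) \<and> (\<exists>k. k \<noteq> 0 \<and> Y = hscale k X)"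

definition midpt :: "'a::field pt \<Rightarrow> 'a pt \<Rightarrow> 'a pt" where
  "midpt p q = ((fst p + fst q) / 2, (snd p + snd q) / 2)"

definition is_line :: "'a::field pt set \<Rightarrow> bool" where
  "is_line L \<longleftrightarrow> (\<exists>a b c. (a \<noteq> 0 \<or> b \<noteq> 0) \<and> L = {(x, y). a * x + b * y = c})"

definition line_through :: "'a::field pt \<Rightarrow> 'a pt \<Rightarrow> 'a pt set" where
  "line_through p q = {(fst p + t * (fst q - fst p), snd p + t * (snd q - snd p)) | t. True}"

definition collinear3 :: "'a::field pt \<Rightarrow> 'a pt \<Rightarrow> 'a pt \<Rightarrow> bool" where
  "collinear3 p q r \<longleftrightarrow> (\<exists>L. is_line L \<and> p \<in> L \<and> q \<in> L \<and> r \<in> L)"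

definition quadrangle :: "'a::field pt \<Rightarrow> 'a pt \<Rightarrow> 'a pt \<Rightarrow> 'a pt \<Rightarrow> bool" where
  "quadrangle A B C D \<longleftrightarrow> distinct [A, B, C, D] \<and>
     \<not> collinear3 A B C \<and> \<not> collinear3 A B D \<and> \<not> collinear3 A C D \<and> \<not> collinear3 B C D"

definition parallel :: "'a::field pt set \<Rightarrow> 'a pt set \<Rightarrow> bool" where
  "parallel L M \<longleftrightarrow> L = M \<or> L \<inter> M = {}"

definition inf_pt :: "'a::field pt set \<Rightarrow> 'a hpt" where
  "inf_pt L = (SOME X. \<exists>p q. p \<in> L \<and> q \<in> L \<and> p \<noteq> q \<and> X = (fst q - fst p, snd q - snd p, 0))"

definition meet_pt :: "'a::field pt set \<Rightarrow> 'a pt set \<Rightarrow> 'a pt" where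
  "meet_pt L M = (THE p. p \<in> L \<inter> M)"

definition meet :: "'a::field pt set \<Rightarrow> 'a pt set \<Rightarrow> 'a hpt" where
  "meet L M = (if L \<inter> M = {} then inf_pt L else hom (meet_pt L M))"

definition crosses :: "'a::field pt set \<Rightarrow> 'a pt set \<times> 'a pt set \<Rightarrow> bool" where
  "crosses l P \<longleftrightarrow> l \<noteq> fst P \<and> l \<noteq> snd P \<and> \<not> (parallel l (fst P) \<and> parallel l (snd P))"

definition mid_of :: "'a::field pt set \<Rightarrow> 'a pt set \<times> 'a pt set \<Rightarrow> 'a hpt" where
  "mid_of l P = (if l \<inter> fst P \<noteq> {} \<and> l \<inter> snd P \<noteq> {}
                 then hom (midpt (meet_pt l (fst P)) (meet_pt l (snd P)))
                 else inf_pt l)"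

definition opp_pairs :: "'a::field pt \<Rightarrow> 'a pt \<Rightarrow> 'a pt \<Rightarrow> 'a pt \<Rightarrow> ('a pt set \<times> 'a pt set) set" where
  "opp_pairs A B C D = {(line_through A B, line_through C D),
                        (line_through A C, line_through B D),
                        (line_through A D, line_through B C)}"

definition bisects :: "'a::field pt \<Rightarrow> 'a pt \<Rightarrow> 'a pt \<Rightarrow> 'a pt \<Rightarrow> 'a pt set \<Rightarrow> bool" where
  "bisects A B C D l \<longleftrightarrow> is_line l \<and>
     (\<forall>P \<in> opp_pairs A B C D. \<forall>P' \<in> opp_pairs A B C D.
        crosses l P \<and> crosses l P' \<longrightarrow> proj_eq (mid_of l P) (mid_of l P'))"

definition bisector_locus :: "'a::field pt \<Rightarrow> 'a pt \<Rightarrow> 'a pt \<Rightarrow> 'a pt \<Rightarrow> 'a hpt set" where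
  "bisector_locus A B C D = {X. \<exists>l P. bisects A B C D l \<and> P \<in> opp_pairs A B C D \<and>
                                       crosses l P \<and> proj_eq (mid_of l P) X}"

definition diagonal_points :: "'a::field pt \<Rightarrow> 'a pt \<Rightarrow> 'a pt \<Rightarrow> 'a pt \<Rightarrow> 'a hpt set" where
  "diagonal_points A B C D = (\<lambda>P. meet (fst P) (snd P)) ` opp_pairs A B C D"

definition midpoints :: "'a::field pt \<Rightarrow> 'a pt \<Rightarrow> 'a pt \<Rightarrow> 'a pt \<Rightarrow> 'a hpt set" where
  "midpoints A B C D = hom ` {midpt A B, midpt A C, midpt A D, midpt B C, midpt B D, midpt C D}"

(* conics: coefficient vectors (a,b,c,d,e,f) of
   a x^2 + b y^2 + c z^2 + d x y + e x z + f y z, not all zero, up to scalar *)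
type_synonym 'a conic = "'a \<times> 'a \<times> 'a \<times> 'a \<times> 'a \<times> 'a"

definition qf :: "'a::field conic \<Rightarrow> 'a hpt \<Rightarrow> 'a" where
  "qf Q X = (case Q of (a, b, c, d, e, f) \<Rightarrow> case X of (x, y, z) \<Rightarrow>
     a * x^2 + b * y^2 + c * z^2 + d * x * y + e * x * z + f * y * z)"

definition cscale :: "'a::field \<Rightarrow> 'a conic \<Rightarrow> 'a conic" where
  "cscale k Q = (case Q of (a, b, c, d, e, f) \<Rightarrow> (k * a, k * b, k * c, k * d, k * e, k * f))"

definition passes_through :: "'a::field conic \<Rightarrow> 'a hpt set \<Rightarrow> bool" where
  "passes_through Q S \<longleftrightarrow> (\<forall>X \<in> S. qf Q X = 0)"

definition is_nine_point_conic :: "'a::field pt \<Rightarrow> 'a pt \<Rightarrow> 'a pt \<Rightarrow> 'a pt \<Rightarrow> 'a conic \<Rightarrow> bool" where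
  "is_nine_point_conic A B C D Q \<longleftrightarrow>
     Q \<noteq> (0, 0, 0, 0, 0, 0) \<and>
     passes_through Q (diagonal_points A B C D \<union> midpoints A B C D) \<and>
     (\<forall>Q'. Q' \<noteq> (0, 0, 0, 0, 0, 0) \<and>
            passes_through Q' (diagonal_points A B C D \<union> midpoints A B C D)
            \<longrightarrow> (\<exists>k. Q' = cscale k Q))"

end

theory Submission
  imports Defs
begin

(* A line through M with direction v meets the sides XY and UW at the parameters
   t1 = -det(Y - X, M - X) / det(Y - X, v) and t2 = -det(W - U, M - U) / det(W - U, v), so M is the
   midpoint of these two points iff t1 + t2 = 0.  Cleared of denominators this condition is
   linear in v: it reads <G_XY,UW(M), v> = 0 for a vector G_XY,UW(M) depending affinely on M.
   The three conditions attached to the three pairs of opposite sides are linearly dependent,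
   so some line through M bisects the quadrangle with midpoint M iff G_AB,CD(M) and G_AC,BD(M)
   are linearly dependent, i.e. iff M lies on the conic det(G_AB,CD(M), G_AC,BD(M)) = 0.
   This conic is a combination of products of the equations of the sides, hence contains the
   diagonal points, and a direct computation shows it contains the six midpoints.  In the
   affine frame (A; B - A, C - A) the six midpoints determine a conic uniquely. *)

definition vdiff :: "'a::field pt \<Rightarrow> 'a pt \<Rightarrow> 'a pt" where
  "vdiff Y X = (fst Y - fst X, snd Y - snd X)"

definition det2 :: "'a::field pt \<Rightarrow> 'a pt \<Rightarrow> 'a" where
  "det2 u v = fst u * snd v - snd u * fst v"

lemma vdiff_neq_0: "X \<noteq> Y \<Longrightarrow> vdiff Y X \<noteq> (0, 0)"
  by (auto simp: vdiff_def prod_eq_iff)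

lemma det2_eq_0_trans:
  fixes a b v :: "'a::field pt"
  assumes "det2 a v = 0" "det2 b v = 0" "v \<noteq> (0, 0)"
  shows "det2 a b = 0"
proof -
  have e1: "fst a * snd v = snd a * fst v" and e2: "fst b * snd v = snd b * fst v"
    using assms by (auto simp: det2_def)
  have "det2 a b * fst v = 0" "det2 a b * snd v = 0"
    unfolding det2_def using e1 e2 by algebra+
  moreover have "fst v \<noteq> 0 \<or> snd v \<noteq> 0" using assms(3) by (auto simp: prod_eq_iff)
  ultimately show ?thesis by auto
qed

lemma det2_eq_0_imp_multiple:
  fixes a v :: "'a::field pt"
  assumes "det2 a v = 0" "v \<noteq> (0, 0)"
  obtains t where "a = (t * fst v, t * snd v)"
proof (cases "fst v = 0")
  case True
  then have "snd v \<noteq> 0" using assms(2) by (metis prod.collapse)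
  moreover have "fst a * snd v = 0" using assms(1) True by (simp add: det2_def)
  ultimately show ?thesis
    using that[of "snd a / snd v"] True by (simp add: prod_eq_iff)
next
  case False
  have "fst a * snd v = snd a * fst v" using assms(1) by (simp add: det2_def)
  then have "snd a = fst a / fst v * snd v" using False by (simp add: field_simps)
  then show ?thesis using that[of "fst a / fst v"] False by (simp add: prod_eq_iff)
qed

lemma dot_eq_0_imp_det2_eq_0:
  fixes g1 g2 v :: "'a::field pt"
  assumes "fst g1 * fst v + snd g1 * snd v = 0" "fst g2 * fst v + snd g2 * snd v = 0"
    and "v \<noteq> (0, 0)"
  shows "det2 g1 g2 = 0"
proof -
  have "det2 g1 (- snd v, fst v) = 0" "det2 g2 (- snd v, fst v) = 0" "(- snd v, fst v) \<noteq> (0, 0)"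
    using assms by (auto simp: det2_def prod_eq_iff algebra_simps)
  then show ?thesis by (rule det2_eq_0_trans)
qed

lemma det2_eq_0_imp_common_orthogonal:
  fixes g1 g2 :: "'a::field pt"
  assumes "det2 g1 g2 = 0"
  obtains v where "v \<noteq> (0, 0)" "fst g1 * fst v + snd g1 * snd v = 0"
    "fst g2 * fst v + snd g2 * snd v = 0"
proof (cases "g1 = (0, 0)")
  case False
  then show ?thesis
    using assms that[of "(- snd g1, fst g1)"] by (auto simp: det2_def prod_eq_iff algebra_simps)
next
  case g1: True
  show ?thesis
  proof (cases "g2 = (0, 0)")
    case False
    then show ?thesis
      using g1 that[of "(- snd g2, fst g2)"] by (auto simp: prod_eq_iff algebra_simps)
  next
    case True
    then show ?thesis using g1 that[of "(1, 0)"] by auto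
  qed
qed

definition line_point :: "'a::field pt \<Rightarrow> 'a pt \<Rightarrow> 'a \<Rightarrow> 'a pt" where
  "line_point M v t = (fst M + t * fst v, snd M + t * snd v)"

definition pline :: "'a::field pt \<Rightarrow> 'a pt \<Rightarrow> 'a pt set" where
  "pline M v = range (line_point M v)"

lemma line_point_0: "line_point M v 0 = M"
  by (simp add: line_point_def)

lemma line_point_0_neq_1: "v \<noteq> (0, 0) \<Longrightarrow> line_point M v 0 \<noteq> line_point M v 1"
  by (simp add: line_point_def prod_eq_iff)

lemma line_through_eq_pline: "line_through X Y = pline X (vdiff Y X)"
  by (auto simp: line_through_def pline_def line_point_def vdiff_def)

lemma det2_vdiff_line_point:
  "det2 u (vdiff (line_point M v t) X) = det2 u (vdiff M X) + t * det2 u v"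
  by (simp add: det2_def vdiff_def line_point_def algebra_simps)

lemma det2_eq_0_imp_mem_pline:
  assumes "det2 (vdiff Z M) v = 0" "v \<noteq> (0, 0)"
  shows "Z \<in> pline M v"
proof -
  obtain t where "vdiff Z M = (t * fst v, t * snd v)"
    using det2_eq_0_imp_multiple assms by blast
  then have "Z = line_point M v t"
    by (simp add: vdiff_def line_point_def prod_eq_iff algebra_simps)
  then show ?thesis by (auto simp: pline_def)
qed

lemma mem_line_through_iff:
  assumes "X \<noteq> Y"
  shows "Z \<in> line_through X Y \<longleftrightarrow> det2 (vdiff Y X) (vdiff Z X) = 0"
proof
  assume "Z \<in> line_through X Y"
  then obtain t where "Z = line_point X (vdiff Y X) t"
    by (auto simp: line_through_eq_pline pline_def)
  then show "det2 (vdiff Y X) (vdiff Z X) = 0"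
    by (simp add: det2_def vdiff_def line_point_def algebra_simps)
next
  assume "det2 (vdiff Y X) (vdiff Z X) = 0"
  then have "det2 (vdiff Z X) (vdiff Y X) = 0" by (simp add: det2_def algebra_simps)
  then show "Z \<in> line_through X Y"
    unfolding line_through_eq_pline using det2_eq_0_imp_mem_pline vdiff_neq_0[OF assms] by blast
qed

lemma is_line_pline:
  assumes "v \<noteq> (0, 0)"
  shows "is_line (pline M v)"
proof -
  have "pline M v = {(x, y). - snd v * x + fst v * y = - snd v * fst M + fst v * snd M}"
  proof (intro set_eqI iffI)
    fix Z assume "Z \<in> pline M v"
    then show "Z \<in> {(x, y). - snd v * x + fst v * y = - snd v * fst M + fst v * snd M}"
      by (auto simp: pline_def line_point_def algebra_simps)
  next
    fix Z assume "Z \<in> {(x, y). - snd v * x + fst v * y = - snd v * fst M + fst v * snd M}"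
    then have "det2 (vdiff Z M) v = 0" by (cases Z) (simp add: det2_def vdiff_def algebra_simps)
    then show "Z \<in> pline M v" using det2_eq_0_imp_mem_pline assms by blast
  qed
  moreover have "- snd v \<noteq> 0 \<or> fst v \<noteq> 0" using assms by (auto simp: prod_eq_iff)
  ultimately show ?thesis unfolding is_line_def by blast
qed

lemma is_line_obtain_pline:
  assumes "is_line l"
  obtains M v where "v \<noteq> (0, 0)" "l = pline M v"
proof -
  obtain a b c where ab: "a \<noteq> 0 \<or> b \<noteq> 0" and l: "l = {(x, y). a * x + b * y = c}"
    using assms unfolding is_line_def by blast
  define v where "v = (- b, a)"
  define M where "M = (if a \<noteq> 0 then (c / a, 0) else (0, c / b))"
  have v: "v \<noteq> (0, 0)" using ab by (auto simp: v_def)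
  have "pline M v = l"
  proof (intro set_eqI iffI)
    fix Z assume "Z \<in> pline M v"
    then show "Z \<in> l" using ab by (auto simp: l pline_def line_point_def M_def v_def field_simps)
  next
    fix Z assume "Z \<in> l"
    then have "det2 (vdiff Z M) v = 0" using ab
      by (cases Z) (auto simp: l det2_def vdiff_def M_def v_def field_simps)
    then show "Z \<in> pline M v" using det2_eq_0_imp_mem_pline v by blast
  qed
  then show ?thesis using that v by blast
qed

lemma collinear3_swap:
  "collinear3 Y X Z \<longleftrightarrow> collinear3 X Y Z"
  "collinear3 X Z Y \<longleftrightarrow> collinear3 X Y Z"
  by (auto simp: collinear3_def)

lemma not_collinear3_imp_det2_neq_0:
  assumes "X \<noteq> Y" "\<not> collinear3 X Y Z"
  shows "det2 (vdiff Y X) (vdiff Z X) \<noteq> 0" "det2 (vdiff X Y) (vdiff Z X) \<noteq> 0"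
    "det2 (vdiff Y X) (vdiff X Z) \<noteq> 0" "det2 (vdiff X Y) (vdiff X Z) \<noteq> 0"
proof -
  show base: "det2 (vdiff Y X) (vdiff Z X) \<noteq> 0"
  proof
    assume "det2 (vdiff Y X) (vdiff Z X) = 0"
    then have "Z \<in> line_through X Y" using mem_line_through_iff assms(1) by blast
    moreover have "X \<in> line_through X Y" "Y \<in> line_through X Y"
      using mem_line_through_iff[OF assms(1)] by (simp_all add: det2_def vdiff_def)
    moreover have "is_line (line_through X Y)"
      unfolding line_through_eq_pline using is_line_pline vdiff_neq_0 assms(1) by blast
    ultimately show False using assms(2) unfolding collinear3_def by blast
  qed
  have "det2 (vdiff X Y) w = - det2 (vdiff Y X) w" "det2 u (vdiff X Z) = - det2 u (vdiff Z X)" for u w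
    by (simp_all add: det2_def vdiff_def algebra_simps)
  then show "det2 (vdiff X Y) (vdiff Z X) \<noteq> 0" "det2 (vdiff Y X) (vdiff X Z) \<noteq> 0"
    "det2 (vdiff X Y) (vdiff X Z) \<noteq> 0"
    using base by simp_all
qed

lemma pline_Int_line_through_singleton:
  assumes "X \<noteq> Y" "det2 (vdiff Y X) v \<noteq> 0"
  shows "pline M v \<inter> line_through X Y
           = {line_point M v (- det2 (vdiff Y X) (vdiff M X) / det2 (vdiff Y X) v)}"
proof -
  have "det2 (vdiff Y X) (vdiff M X) + t * det2 (vdiff Y X) v = 0 \<longleftrightarrow>
      t = - det2 (vdiff Y X) (vdiff M X) / det2 (vdiff Y X) v" for t
    using assms(2) by (auto simp: field_simps add_eq_0_iff2)
  then show ?thesis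
    using assms by (auto simp: pline_def mem_line_through_iff det2_vdiff_line_point)
qed

lemma pline_Int_line_through_empty:
  assumes "X \<noteq> Y" "det2 (vdiff Y X) v = 0" "det2 (vdiff Y X) (vdiff M X) \<noteq> 0"
  shows "pline M v \<inter> line_through X Y = {}"
  using assms by (auto simp: pline_def mem_line_through_iff det2_vdiff_line_point)

lemma pline_eq_line_through:
  assumes "X \<noteq> Y" "v \<noteq> (0, 0)" "det2 (vdiff Y X) v = 0" "det2 (vdiff Y X) (vdiff M X) = 0"
  shows "pline M v = line_through X Y"
proof
  show "pline M v \<subseteq> line_through X Y"
    using assms by (auto simp: pline_def mem_line_through_iff det2_vdiff_line_point)
next
  show "line_through X Y \<subseteq> pline M v"
  proof
    fix Z assume "Z \<in> line_through X Y"
    then have "det2 (vdiff Y X) (vdiff Z X) = 0" using mem_line_through_iff assms(1) by blast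
    moreover have "det2 (vdiff Y X) (vdiff Z M)
        = det2 (vdiff Y X) (vdiff Z X) - det2 (vdiff Y X) (vdiff M X)"
      by (simp add: det2_def vdiff_def algebra_simps)
    ultimately have "det2 (vdiff Z M) (vdiff Y X) = 0"
      using assms(4) by (simp add: det2_def algebra_simps)
    moreover have "det2 v (vdiff Y X) = 0" using assms(3) by (simp add: det2_def algebra_simps)
    ultimately have "det2 (vdiff Z M) v = 0"
      using det2_eq_0_trans vdiff_neq_0[OF assms(1)] by blast
    then show "Z \<in> pline M v" using det2_eq_0_imp_mem_pline assms(2) by blast
  qed
qed

lemma pline_not_singleton:
  assumes "v \<noteq> (0, 0)"
  shows "pline M v \<noteq> {p}"
proof
  assume "pline M v = {p}"
  then have "line_point M v 0 = p" "line_point M v 1 = p" by (auto simp: pline_def)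
  then show False using line_point_0_neq_1[OF assms] by metis
qed

lemma base_mem_pline: "M \<in> pline M v"
  by (metis line_point_0 pline_def rangeI)

lemma pline_eq_line_through_iff:
  assumes "X \<noteq> Y" "v \<noteq> (0, 0)"
  shows "pline M v = line_through X Y \<longleftrightarrow>
           det2 (vdiff Y X) v = 0 \<and> det2 (vdiff Y X) (vdiff M X) = 0"
proof (cases "det2 (vdiff Y X) v = 0")
  case True
  show ?thesis
  proof (cases "det2 (vdiff Y X) (vdiff M X) = 0")
    case True2: True
    show ?thesis using pline_eq_line_through[OF assms True True2] True True2 by simp
  next
    case False
    have "pline M v \<inter> line_through X Y = {}"
      using pline_Int_line_through_empty[OF assms(1) True False] .
    then have "pline M v \<noteq> line_through X Y" using base_mem_pline[of M v] by blast
    then show ?thesis using False by simp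
  qed
next
  case False
  have "pline M v \<noteq> pline M v \<inter> line_through X Y"
    unfolding pline_Int_line_through_singleton[OF assms(1) False]
    by (rule pline_not_singleton[OF assms(2)])
  then have "pline M v \<noteq> line_through X Y" by (metis Int_absorb)
  then show ?thesis using False by simp
qed

lemma pline_Int_line_through_empty_iff:
  assumes "X \<noteq> Y" "v \<noteq> (0, 0)"
  shows "pline M v \<inter> line_through X Y = {} \<longleftrightarrow>
           det2 (vdiff Y X) v = 0 \<and> det2 (vdiff Y X) (vdiff M X) \<noteq> 0"
proof (cases "det2 (vdiff Y X) v = 0")
  case True
  show ?thesis
  proof (cases "det2 (vdiff Y X) (vdiff M X) = 0")
    case True2: True
    have "pline M v \<inter> line_through X Y \<noteq> {}"
      using pline_eq_line_through[OF assms True True2] base_mem_pline[of M v] by blast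
    then show ?thesis using True2 by simp
  next
    case False
    show ?thesis using pline_Int_line_through_empty[OF assms(1) True False] True False by simp
  qed
next
  case False
  show ?thesis using pline_Int_line_through_singleton[OF assms(1) False, of M] False by simp
qed

lemma parallel_pline_line_through_iff:
  assumes "X \<noteq> Y" "v \<noteq> (0, 0)"
  shows "parallel (pline M v) (line_through X Y) \<longleftrightarrow> det2 (vdiff Y X) v = 0"
  unfolding parallel_def pline_eq_line_through_iff[OF assms]
    pline_Int_line_through_empty_iff[OF assms] by blast

lemma meet_pt_pline_line_through:
  assumes "X \<noteq> Y" "det2 (vdiff Y X) v \<noteq> 0"
  shows "meet_pt (pline M v) (line_through X Y)
           = line_point M v (- det2 (vdiff Y X) (vdiff M X) / det2 (vdiff Y X) v)"
  unfolding meet_pt_def pline_Int_line_through_singleton[OF assms] by simp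

lemma inf_pt_pline:
  assumes "v \<noteq> (0, 0)"
  obtains s where "inf_pt (pline M v) = (s * fst v, s * snd v, 0)"
proof -
  let ?P = "\<lambda>X. \<exists>p q. p \<in> pline M v \<and> q \<in> pline M v \<and> p \<noteq> q \<and>
                       X = (fst q - fst p, snd q - snd p, 0)"
  have "?P (fst (line_point M v 1) - fst (line_point M v 0),
            snd (line_point M v 1) - snd (line_point M v 0), 0)"
    using line_point_0_neq_1[OF assms, of M] by (auto simp: pline_def)
  then have "?P (inf_pt (pline M v))" unfolding inf_pt_def by (rule someI)
  then obtain s t where "inf_pt (pline M v) = (fst (line_point M v t) - fst (line_point M v s),
                                               snd (line_point M v t) - snd (line_point M v s), 0)"
    by (auto simp: pline_def)
  then have "inf_pt (pline M v) = ((t - s) * fst v, (t - s) * snd v, 0)"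
    by (simp add: line_point_def algebra_simps)
  then show ?thesis using that by blast
qed

section \<open>The midpoint condition for a pair of lines\<close>

type_synonym 'a line_pair = "'a pt \<times> 'a pt \<times> 'a pt \<times> 'a pt"

fun side_lines :: "'a::field line_pair \<Rightarrow> 'a pt set \<times> 'a pt set" where
  "side_lines (X, Y, U, W) = (line_through X Y, line_through U W)"

fun proper_pair :: "'a::field line_pair \<Rightarrow> bool" where
  "proper_pair (X, Y, U, W) \<longleftrightarrow> X \<noteq> Y \<and> U \<noteq> W"

fun transversal :: "'a::field pt \<Rightarrow> 'a line_pair \<Rightarrow> bool" where
  "transversal v (X, Y, U, W) \<longleftrightarrow> det2 (vdiff Y X) v \<noteq> 0 \<and> det2 (vdiff W U) v \<noteq> 0"

text \<open>\<open>mid_param M v t\<close> is the parameter of the midpoint of the two intersection points on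
  the line \<open>s \<mapsto> M + s v\<close>; \<open>mid_defect M v t\<close> is the numerator of \<open>-2 * mid_param M v t\<close>
  over the common denominator, which stays meaningful when the line is parallel to a side.\<close>

fun mid_param :: "'a::field pt \<Rightarrow> 'a pt \<Rightarrow> 'a line_pair \<Rightarrow> 'a" where
  "mid_param M v (X, Y, U, W) =
     - (det2 (vdiff Y X) (vdiff M X) / det2 (vdiff Y X) v
        + det2 (vdiff W U) (vdiff M U) / det2 (vdiff W U) v) / 2"

fun mid_defect :: "'a::field pt \<Rightarrow> 'a pt \<Rightarrow> 'a line_pair \<Rightarrow> 'a" where
  "mid_defect M v (X, Y, U, W) =
     det2 (vdiff Y X) (vdiff M X) * det2 (vdiff W U) v
     + det2 (vdiff W U) (vdiff M U) * det2 (vdiff Y X) v"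

lemma crosses_pline_iff:
  assumes "X \<noteq> Y" "U \<noteq> W" "v \<noteq> (0, 0)"
  shows "crosses (pline M v) (side_lines (X, Y, U, W)) \<longleftrightarrow>
    \<not> (det2 (vdiff Y X) v = 0 \<and> det2 (vdiff Y X) (vdiff M X) = 0) \<and>
    \<not> (det2 (vdiff W U) v = 0 \<and> det2 (vdiff W U) (vdiff M U) = 0) \<and>
    \<not> (det2 (vdiff Y X) v = 0 \<and> det2 (vdiff W U) v = 0)"
  unfolding crosses_def side_lines.simps
  using pline_eq_line_through_iff[OF assms(1,3), of M] pline_eq_line_through_iff[OF assms(2,3), of M]
    parallel_pline_line_through_iff[OF assms(1,3), of M]
    parallel_pline_line_through_iff[OF assms(2,3), of M]
  by simp

lemma transversal_imp_crosses:
  assumes "proper_pair t" "v \<noteq> (0, 0)" "transversal v t"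
  shows "crosses (pline M v) (side_lines t)"
proof -
  obtain X Y U W where t: "t = (X, Y, U, W)" by (rule prod_cases4)
  show ?thesis using assms crosses_pline_iff[OF _ _ assms(2)] by (simp add: t)
qed

lemma midpt_line_point:
  assumes "(2::'a::field) \<noteq> 0"
  shows "midpt (line_point M v s) (line_point M v t) = line_point M v ((s + t) / (2::'a))"
  using assms by (simp add: midpt_def line_point_def field_simps)

lemma mid_of_transversal:
  fixes M v :: "'a::field pt"
  assumes two: "(2::'a) \<noteq> 0" and "proper_pair t" and v: "v \<noteq> (0, 0)"
    and "transversal v t"
  shows "mid_of (pline M v) (side_lines t) = hom (line_point M v (mid_param M v t))"
proof -
  obtain X Y U W where t: "t = (X, Y, U, W)" by (rule prod_cases4)
  have XY: "X \<noteq> Y" and UW: "U \<noteq> W" using assms(2) by (simp_all add: t)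
  have l1: "det2 (vdiff Y X) v \<noteq> 0" and l2: "det2 (vdiff W U) v \<noteq> 0"
    using assms(4) by (simp_all add: t)
  have "pline M v \<inter> line_through X Y \<noteq> {}" "pline M v \<inter> line_through U W \<noteq> {}"
    using pline_Int_line_through_empty_iff[OF XY v] pline_Int_line_through_empty_iff[OF UW v]
      l1 l2 by simp_all
  then show ?thesis
    unfolding t mid_of_def side_lines.simps
    by (simp add: meet_pt_pline_line_through[OF XY l1] meet_pt_pline_line_through[OF UW l2]
        midpt_line_point[OF two] add_divide_distrib[symmetric] diff_divide_distrib)
qed

lemma mid_defect_at_mid_param:
  fixes M v :: "'a::field pt"
  assumes "(2::'a) \<noteq> 0" "transversal v t"
  shows "mid_defect (line_point M v (mid_param M v t)) v t = 0"
proof -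
  obtain X Y U W where t: "t = (X, Y, U, W)" by (rule prod_cases4)
  have "det2 (vdiff Y X) v \<noteq> 0" "det2 (vdiff W U) v \<noteq> 0" using assms(2) by (simp_all add: t)
  then show ?thesis
    unfolding t mid_defect.simps det2_vdiff_line_point mid_param.simps
    using assms(1) by (simp add: field_simps)
qed

lemma mid_param_eq_0:
  assumes "transversal v t" "mid_defect M v t = 0"
  shows "mid_param M v t = 0"
proof -
  obtain X Y U W where t: "t = (X, Y, U, W)" by (rule prod_cases4)
  have "det2 (vdiff Y X) v \<noteq> 0" "det2 (vdiff W U) v \<noteq> 0" using assms(1) by (simp_all add: t)
  then have "det2 (vdiff Y X) (vdiff M X) / det2 (vdiff Y X) v
      + det2 (vdiff W U) (vdiff M U) / det2 (vdiff W U) v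
      = (det2 (vdiff Y X) (vdiff M X) * det2 (vdiff W U) v
         + det2 (vdiff W U) (vdiff M U) * det2 (vdiff Y X) v)
        / (det2 (vdiff Y X) v * det2 (vdiff W U) v)"
    by (simp add: field_simps)
  then show ?thesis using assms(2) by (simp add: t)
qed

lemma mid_of_not_transversal:
  assumes "proper_pair t" and v: "v \<noteq> (0, 0)"
    and cr: "crosses (pline M v) (side_lines t)" and "\<not> transversal v t"
  shows "snd (snd (mid_of (pline M v) (side_lines t))) = 0"
proof -
  obtain X Y U W where t: "t = (X, Y, U, W)" by (rule prod_cases4)
  have XY: "X \<noteq> Y" and UW: "U \<noteq> W" using assms(1) by (simp_all add: t)
  have nt: "\<not> (det2 (vdiff Y X) v \<noteq> 0 \<and> det2 (vdiff W U) v \<noteq> 0)"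
    using assms(4) by (simp add: t)
  note c = cr[unfolded t crosses_pline_iff[OF XY UW v]]
  have "pline M v \<inter> line_through X Y = {} \<or> pline M v \<inter> line_through U W = {}"
    using nt c pline_Int_line_through_empty_iff[OF XY v, of M]
      pline_Int_line_through_empty_iff[OF UW v, of M] by auto
  then have "mid_of (pline M v) (side_lines t) = inf_pt (pline M v)"
    unfolding mid_of_def t by auto
  moreover obtain s where "inf_pt (pline M v) = (s * fst v, s * snd v, 0)"
    using inf_pt_pline[OF v] .
  ultimately show ?thesis by simp
qed

lemma mid_defect_eq_0_imp_transversal:
  assumes "proper_pair t" and v: "v \<noteq> (0, 0)"
    and cr: "crosses (pline M v) (side_lines t)" and "mid_defect M v t = 0"
  shows "transversal v t"
proof -
  obtain X Y U W where t: "t = (X, Y, U, W)" by (rule prod_cases4)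
  have XY: "X \<noteq> Y" and UW: "U \<noteq> W" using assms(1) by (simp_all add: t)
  have D: "det2 (vdiff Y X) (vdiff M X) * det2 (vdiff W U) v
        + det2 (vdiff W U) (vdiff M U) * det2 (vdiff Y X) v = 0"
    using assms(4) by (simp add: t)
  note c = cr[unfolded t crosses_pline_iff[OF XY UW v]]
  show ?thesis
  proof (rule ccontr)
    assume "\<not> transversal v t"
    then have "det2 (vdiff Y X) v = 0 \<or> det2 (vdiff W U) v = 0" by (simp add: t)
    then show False using c D by auto
  qed
qed

lemma mid_of_eq_hom_if_mid_defect_eq_0:
  fixes M v :: "'a::field pt"
  assumes "(2::'a) \<noteq> 0" "proper_pair t" "v \<noteq> (0, 0)"
    and "crosses (pline M v) (side_lines t)" "mid_defect M v t = 0"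
  shows "mid_of (pline M v) (side_lines t) = hom M"
proof -
  have tr: "transversal v t" using mid_defect_eq_0_imp_transversal assms(2-5) .
  have "mid_param M v t = 0" using mid_param_eq_0[OF tr assms(5)] .
  then show ?thesis using mid_of_transversal[OF assms(1-3) tr, of M] by (simp add: line_point_0)
qed

lemma mid_defect_three_pairs:
  "mid_defect M v (A, B, C, D) - mid_defect M v (A, C, B, D) + mid_defect M v (A, D, B, C) = 0"
  by (cases M; cases v; cases A; cases B; cases C; cases D)
    (simp add: det2_def vdiff_def algebra_simps)

section \<open>The bisector conic\<close>

definition line_coeffs :: "'a::field pt \<Rightarrow> 'a pt \<Rightarrow> 'a hpt" where
  "line_coeffs X Y =
     (- (snd Y - snd X), fst Y - fst X, (snd Y - snd X) * fst X - (fst Y - fst X) * snd X)"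

definition hdot :: "'a::field hpt \<Rightarrow> 'a hpt \<Rightarrow> 'a" where
  "hdot F Z = fst F * fst Z + fst (snd F) * fst (snd Z) + snd (snd F) * snd (snd Z)"

definition conic_mult :: "'a::field hpt \<Rightarrow> 'a hpt \<Rightarrow> 'a conic" where
  "conic_mult F G = (case F of (f1, f2, f3) \<Rightarrow> case G of (g1, g2, g3) \<Rightarrow>
     (f1 * g1, f2 * g2, f3 * g3, f1 * g2 + f2 * g1, f1 * g3 + f3 * g1, f2 * g3 + f3 * g2))"

definition conic_add :: "'a::field conic \<Rightarrow> 'a conic \<Rightarrow> 'a conic" where
  "conic_add P R = (case P of (a, b, c, d, e, f) \<Rightarrow> case R of (a', b', c', d', e', f') \<Rightarrow>
     (a + a', b + b', c + c', d + d', e + e', f + f'))"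

lemma qf_conic_mult: "qf (conic_mult F G) Z = hdot F Z * hdot G Z"
  by (cases F; cases G; cases Z)
    (simp add: qf_def conic_mult_def hdot_def power2_eq_square algebra_simps)

lemma qf_conic_add: "qf (conic_add P R) Z = qf P Z + qf R Z"
  by (cases P; cases R; cases Z) (simp add: qf_def conic_add_def algebra_simps)

lemma qf_cscale: "qf (cscale k P) Z = k * qf P Z"
  by (cases P; cases Z) (simp add: qf_def cscale_def algebra_simps)

lemma qf_hscale: "qf R (hscale k Z) = k^2 * qf R Z"
  by (cases R; cases Z) (simp add: qf_def hscale_def power2_eq_square algebra_simps)

lemma hdot_line_coeffs_hom: "hdot (line_coeffs X Y) (hom Z) = det2 (vdiff Y X) (vdiff Z X)"
  by (simp add: hdot_def line_coeffs_def hom_def det2_def vdiff_def algebra_simps)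

fun defect_vec :: "'a::field hpt \<Rightarrow> 'a line_pair \<Rightarrow> 'a pt" where
  "defect_vec Z (X, Y, U, W) =
     (hdot (line_coeffs X Y) Z * - snd (vdiff W U) + hdot (line_coeffs U W) Z * - snd (vdiff Y X),
      hdot (line_coeffs X Y) Z * fst (vdiff W U) + hdot (line_coeffs U W) Z * fst (vdiff Y X))"

lemma mid_defect_eq_dot_defect_vec:
  "mid_defect M v t = fst (defect_vec (hom M) t) * fst v + snd (defect_vec (hom M) t) * snd v"
proof -
  obtain X Y U W where t: "t = (X, Y, U, W)" by (rule prod_cases4)
  show ?thesis
    unfolding t mid_defect.simps defect_vec.simps hdot_line_coeffs_hom det2_def vdiff_def
    by simp algebra
qed

text \<open>The expanded form of \<open>det2 (defect_vec Z (A, B, C, D)) (defect_vec Z (A, C, B, D))\<close>: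
  every term is the product of an equation of \<open>AB\<close> or \<open>CD\<close> with one of \<open>AC\<close> or \<open>BD\<close>.\<close>

definition bisector_conic :: "'a::field pt \<Rightarrow> 'a pt \<Rightarrow> 'a pt \<Rightarrow> 'a pt \<Rightarrow> 'a conic" where
  "bisector_conic A B C D =
     conic_add
       (conic_add
         (cscale (det2 (vdiff D C) (vdiff D B)) (conic_mult (line_coeffs A B) (line_coeffs A C)))
         (cscale (det2 (vdiff D C) (vdiff C A)) (conic_mult (line_coeffs A B) (line_coeffs B D))))
       (conic_add
         (cscale (det2 (vdiff B A) (vdiff D B)) (conic_mult (line_coeffs C D) (line_coeffs A C)))
         (cscale (det2 (vdiff B A) (vdiff C A)) (conic_mult (line_coeffs C D) (line_coeffs B D))))"

lemma qf_bisector_conic: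
  "qf (bisector_conic A B C D) Z = det2 (defect_vec Z (A, B, C, D)) (defect_vec Z (A, C, B, D))"
  unfolding bisector_conic_def qf_conic_add qf_cscale qf_conic_mult defect_vec.simps
    det2_def vdiff_def hdot_def line_coeffs_def
  by simp algebra

lemma qf_bisector_conic':
  "qf (bisector_conic A B C D) Z = det2 (defect_vec Z (A, B, C, D)) (defect_vec Z (A, D, B, C))"
  unfolding bisector_conic_def qf_conic_add qf_cscale qf_conic_mult defect_vec.simps
    det2_def vdiff_def hdot_def line_coeffs_def
  by simp algebra

lemma bisector_conic_centered_midpoints:
  "qf (bisector_conic (m1 - h1, m2 - h2) (m1 + h1, m2 + h2) C D) (m1, m2, 1) = 0"
  "qf (bisector_conic (m1 - h1, m2 - h2) B (m1 + h1, m2 + h2) D) (m1, m2, 1) = 0"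
  "qf (bisector_conic (m1 - h1, m2 - h2) B C (m1 + h1, m2 + h2)) (m1, m2, 1) = 0"
  "qf (bisector_conic A (m1 - h1, m2 - h2) (m1 + h1, m2 + h2) D) (m1, m2, 1) = 0"
  "qf (bisector_conic A (m1 - h1, m2 - h2) C (m1 + h1, m2 + h2)) (m1, m2, 1) = 0"
  "qf (bisector_conic A B (m1 - h1, m2 - h2) (m1 + h1, m2 + h2)) (m1, m2, 1) = 0"
  unfolding qf_bisector_conic qf_bisector_conic'[of A] qf_bisector_conic'[of "(m1 - h1, m2 - h2)"]
    defect_vec.simps det2_def vdiff_def hdot_def line_coeffs_def
  by (simp; algebra)+

lemma four_neq_0: "(2::'a::field) \<noteq> 0 \<Longrightarrow> (4::'a) \<noteq> 0"
  by (metis mult_2 numeral_Bit0 no_zero_divisors)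

lemma obtain_centered:
  fixes X Y :: "'a::field pt"
  assumes "(2::'a) \<noteq> 0"
  obtains m1 m2 h1 h2
  where "X = (m1 - h1, m2 - h2)" "Y = (m1 + h1, m2 + h2)" "hom (midpt X Y) = (m1, m2, 1)"
proof
  show "X = ((fst X + fst Y) / 2 - (fst Y - fst X) / 2, (snd X + snd Y) / 2 - (snd Y - snd X) / 2)"
    "Y = ((fst X + fst Y) / 2 + (fst Y - fst X) / 2, (snd X + snd Y) / 2 + (snd Y - snd X) / 2)"
    using assms four_neq_0[OF assms] by (simp_all add: prod_eq_iff field_simps)
qed (simp add: hom_def midpt_def)

lemma bisector_conic_midpt:
  assumes "(2::'a::field) \<noteq> 0"
  shows "qf (bisector_conic A B C D) (hom (midpt A B)) = (0::'a)"
    "qf (bisector_conic A B C D) (hom (midpt A C)) = 0"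
    "qf (bisector_conic A B C D) (hom (midpt A D)) = 0"
    "qf (bisector_conic A B C D) (hom (midpt B C)) = 0"
    "qf (bisector_conic A B C D) (hom (midpt B D)) = 0"
    "qf (bisector_conic A B C D) (hom (midpt C D)) = 0"
  by (rule obtain_centered[OF assms, of A B], simp add: bisector_conic_centered_midpoints,
      rule obtain_centered[OF assms, of A C], simp add: bisector_conic_centered_midpoints,
      rule obtain_centered[OF assms, of A D], simp add: bisector_conic_centered_midpoints,
      rule obtain_centered[OF assms, of B C], simp add: bisector_conic_centered_midpoints,
      rule obtain_centered[OF assms, of B D], simp add: bisector_conic_centered_midpoints,
      rule obtain_centered[OF assms, of C D], simp add: bisector_conic_centered_midpoints)

lemma meet_on_both_lines:
  assumes XY: "X \<noteq> Y" and UW: "U \<noteq> W" and "det2 (vdiff W U) (vdiff X U) \<noteq> 0"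
  shows "hdot (line_coeffs X Y) (meet (line_through X Y) (line_through U W)) = 0"
    "hdot (line_coeffs U W) (meet (line_through X Y) (line_through U W)) = 0"
proof -
  let ?u = "vdiff Y X"
  have L: "line_through X Y = pline X ?u" by (rule line_through_eq_pline)
  have "hdot (line_coeffs X Y) (meet (line_through X Y) (line_through U W)) = 0 \<and>
        hdot (line_coeffs U W) (meet (line_through X Y) (line_through U W)) = 0"
  proof (cases "det2 (vdiff W U) ?u = 0")
    case False
    let ?t = "- det2 (vdiff W U) (vdiff X U) / det2 (vdiff W U) ?u"
    have I: "pline X ?u \<inter> line_through U W = {line_point X ?u ?t}"
      using pline_Int_line_through_singleton[OF UW False] .
    have m: "meet (line_through X Y) (line_through U W) = hom (line_point X ?u ?t)"
      unfolding meet_def meet_pt_def L I by simp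
    have "det2 ?u (vdiff (line_point X ?u ?t) X) = 0"
      by (simp add: det2_def vdiff_def line_point_def algebra_simps)
    moreover have "det2 (vdiff W U) (vdiff (line_point X ?u ?t) U) = 0"
      unfolding det2_vdiff_line_point using False by simp
    ultimately show ?thesis unfolding m hdot_line_coeffs_hom by simp
  next
    case True
    have I: "pline X ?u \<inter> line_through U W = {}"
      using pline_Int_line_through_empty[OF UW True assms(3)] .
    obtain s where s: "inf_pt (pline X ?u) = (s * fst ?u, s * snd ?u, 0)"
      using inf_pt_pline[OF vdiff_neq_0[OF XY]] by blast
    have m: "meet (line_through X Y) (line_through U W) = (s * fst ?u, s * snd ?u, 0)"
      unfolding meet_def L I s by simp
    have "hdot (line_coeffs U W) (s * fst ?u, s * snd ?u, 0) = s * det2 (vdiff W U) ?u"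
      by (simp add: hdot_def line_coeffs_def det2_def vdiff_def algebra_simps)
    then show ?thesis
      unfolding m using True by (simp add: hdot_def line_coeffs_def vdiff_def algebra_simps)
  qed
  then show "hdot (line_coeffs X Y) (meet (line_through X Y) (line_through U W)) = 0"
    "hdot (line_coeffs U W) (meet (line_through X Y) (line_through U W)) = 0" by simp_all
qed

lemma bisector_conic_on_side_pairs:
  assumes "hdot (line_coeffs A B) Z = 0 \<and> hdot (line_coeffs C D) Z = 0 \<or>
           hdot (line_coeffs A C) Z = 0 \<and> hdot (line_coeffs B D) Z = 0 \<or>
           hdot (line_coeffs A D) Z = 0 \<and> hdot (line_coeffs B C) Z = 0"
  shows "qf (bisector_conic A B C D) Z = 0"
  using assms
proof (elim disjE conjE)
  assume "hdot (line_coeffs A D) Z = 0" "hdot (line_coeffs B C) Z = 0"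
  then show ?thesis by (simp add: qf_bisector_conic' det2_def)
qed (simp_all add: bisector_conic_def qf_conic_add qf_cscale qf_conic_mult)

lemma qf_bisector_conic_vertex:
  "qf (bisector_conic A B C D) (hom A)
     = det2 (vdiff B A) (vdiff C A) * (det2 (vdiff D C) (vdiff A C) * det2 (vdiff D B) (vdiff A B))"
  by (simp add: bisector_conic_def qf_conic_add qf_cscale qf_conic_mult hdot_line_coeffs_hom
      det2_def vdiff_def)

section \<open>Uniqueness of the conic through six midpoints\<close>

definition affine_hmap :: "'a::field pt \<Rightarrow> 'a pt \<Rightarrow> 'a pt \<Rightarrow> 'a hpt \<Rightarrow> 'a hpt" where
  "affine_hmap A u w Z = (case Z of (x, y, z) \<Rightarrow>
     (fst A * z + fst u * x + fst w * y, snd A * z + snd u * x + snd w * y, z))"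

definition conic_pullback :: "'a::field pt \<Rightarrow> 'a pt \<Rightarrow> 'a pt \<Rightarrow> 'a conic \<Rightarrow> 'a conic" where
  "conic_pullback A u w R = (case R of (a, b, c, d, e, f) \<Rightarrow>
     (a * fst u ^ 2 + b * snd u ^ 2 + d * fst u * snd u,
      a * fst w ^ 2 + b * snd w ^ 2 + d * fst w * snd w,
      a * fst A ^ 2 + b * snd A ^ 2 + c + d * fst A * snd A + e * fst A + f * snd A,
      2 * a * fst u * fst w + 2 * b * snd u * snd w + d * (fst u * snd w + snd u * fst w),
      2 * a * fst u * fst A + 2 * b * snd u * snd A + d * (fst u * snd A + snd u * fst A)
        + e * fst u + f * snd u,
      2 * a * fst w * fst A + 2 * b * snd w * snd A + d * (fst w * snd A + snd w * fst A)
        + e * fst w + f * snd w))"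

lemma qf_conic_pullback: "qf (conic_pullback A u w R) Z = qf R (affine_hmap A u w Z)"
proof -
  obtain a1 a2 where A: "A = (a1, a2)" by (cases A)
  obtain u1 u2 where u: "u = (u1, u2)" by (cases u)
  obtain w1 w2 where w: "w = (w1, w2)" by (cases w)
  obtain a b c d e f where R: "R = (a, b, c, d, e, f)" by (cases R)
  obtain x y z where Z: "Z = (x, y, z)" by (cases Z)
  show ?thesis unfolding A u w R Z conic_pullback_def affine_hmap_def qf_def by simp algebra
qed

lemma affine_hmap_surj:
  assumes "det2 u w \<noteq> 0"
  obtains Z where "affine_hmap A u w Z = Y"
proof -
  obtain y1 y2 y3 where Y: "Y = (y1, y2, y3)" by (cases Y)
  let ?r = "(y1 - fst A * y3, y2 - snd A * y3)"
  have "fst u * det2 ?r w + fst w * det2 u ?r = (y1 - fst A * y3) * det2 u w"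
    "snd u * det2 ?r w + snd w * det2 u ?r = (y2 - snd A * y3) * det2 u w"
    unfolding det2_def by (simp; algebra)+
  then have "fst u * (det2 ?r w / det2 u w) + fst w * (det2 u ?r / det2 u w) = y1 - fst A * y3"
    "snd u * (det2 ?r w / det2 u w) + snd w * (det2 u ?r / det2 u w) = y2 - snd A * y3"
    using assms by (simp_all add: field_simps)
  then have "affine_hmap A u w (det2 ?r w / det2 u w, det2 u ?r / det2 u w, y3) = Y"
    unfolding Y affine_hmap_def by (simp add: algebra_simps)
  then show ?thesis using that by blast
qed

lemma conic_eqI:
  assumes "\<And>Z. qf R1 Z = qf R2 Z"
  shows "R1 = R2"
proof -
  obtain a b c d e f where R1: "R1 = (a, b, c, d, e, f)" by (cases R1)
  obtain a' b' c' d' e' f' where R2: "R2 = (a', b', c', d', e', f')" by (cases R2)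
  have "a = a'" "b = b'" "c = c'"
    using assms[of "(1, 0, 0)"] assms[of "(0, 1, 0)"] assms[of "(0, 0, 1)"]
    by (simp_all add: R1 R2 qf_def)
  moreover have "d = d'" "e = e'" "f = f'"
    using assms[of "(1, 1, 0)"] assms[of "(1, 0, 1)"] assms[of "(0, 1, 1)"] calculation
    by (simp_all add: R1 R2 qf_def)
  ultimately show ?thesis using R1 R2 by simp
qed

text \<open>In coordinates where the vertices are \<open>(0, 0), (1, 0), (0, 1), (p, q)\<close>, the conics through
  the six midpoints (with homogeneous coordinates scaled by 2) are the multiples of this one.\<close>

definition normal_conic :: "'a::field \<Rightarrow> 'a \<Rightarrow> 'a conic" where
  "normal_conic p q = (-4 - 2 * (-(1 + 2*p - q) / p), -4 - 2 * (-(1 + 2*q - p) / q), 1, 4,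
                       -(1 + 2*p - q) / p, -(1 + 2*q - p) / q)"

lemma conic_through_normal_midpoints:
  fixes p q :: "'a::field"
  assumes two: "(2::'a) \<noteq> 0" and p: "p \<noteq> 0" and q: "q \<noteq> 0"
    and h1: "qf R (1, 0, 2) = 0" and h2: "qf R (0, 1, 2) = 0" and h3: "qf R (1, 1, 2) = 0"
    and h4: "qf R (p, q, 2) = 0" and h5: "qf R (1 + p, q, 2) = 0" and h6: "qf R (p, 1 + q, 2) = 0"
  shows "R = cscale (fst (snd (snd R))) (normal_conic p q)"
proof -
  obtain a b c d e f where R: "R = (a, b, c, d, e, f)" by (cases R)
  have e1: "a + 4*c + 2*e = 0" using h1 by (simp add: R qf_def power2_eq_square algebra_simps)
  have e2: "b + 4*c + 2*f = 0" using h2 by (simp add: R qf_def power2_eq_square algebra_simps)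
  have e3: "a + b + 4*c + d + 2*e + 2*f = 0"
    using h3 by (simp add: R qf_def power2_eq_square algebra_simps)
  have e4: "a*p*p + b*q*q + 4*c + d*p*q + 2*e*p + 2*f*q = 0"
    using h4 by (simp add: R qf_def power2_eq_square algebra_simps)
  have e5: "a*(1+p)*(1+p) + b*q*q + 4*c + d*(1+p)*q + 2*e*(1+p) + 2*f*q = 0"
    using h5 by (simp add: R qf_def power2_eq_square algebra_simps)
  have e6: "a*p*p + b*(1+q)*(1+q) + 4*c + d*p*(1+q) + 2*e*p + 2*f*(1+q) = 0"
    using h6 by (simp add: R qf_def power2_eq_square algebra_simps)
  have dd: "d = 4*c" using e1 e2 e3 by algebra
  have "4 * (c + 2*c*p + e*p - c*q) = 0" using e1 e4 e5 dd by algebra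
  then have "c + 2*c*p + e*p - c*q = 0" using four_neq_0[OF two] mult_eq_0_iff by blast
  then have ee: "e = c * (-(1 + 2*p - q) / p)" using p by (simp add: field_simps; algebra)
  have "4 * (c + 2*c*q + f*q - c*p) = 0" using e2 e4 e6 dd by algebra
  then have "c + 2*c*q + f*q - c*p = 0" using four_neq_0[OF two] mult_eq_0_iff by blast
  then have ff: "f = c * (-(1 + 2*q - p) / q)" using q by (simp add: field_simps; algebra)
  have aa: "a = c * (-4 - 2 * (-(1 + 2*p - q) / p))"
    using e1 ee by (simp add: algebra_simps; algebra)
  have bb: "b = c * (-4 - 2 * (-(1 + 2*q - p) / q))"
    using e2 ff by (simp add: algebra_simps; algebra)
  show ?thesis
    unfolding R normal_conic_def cscale_def using aa bb dd ee ff by (simp add: algebra_simps)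
qed

lemma affine_hmap_midpoints:
  fixes A B C D :: "'a::field pt"
  assumes two: "(2::'a) \<noteq> 0"
    and D: "D = (fst A + p * fst (vdiff B A) + q * fst (vdiff C A),
                 snd A + p * snd (vdiff B A) + q * snd (vdiff C A))"
  defines "\<phi> \<equiv> affine_hmap A (vdiff B A) (vdiff C A)"
  shows "\<phi> (1, 0, 2) = hscale 2 (hom (midpt A B))"
    "\<phi> (0, 1, 2) = hscale 2 (hom (midpt A C))"
    "\<phi> (1, 1, 2) = hscale 2 (hom (midpt B C))"
    "\<phi> (p, q, 2) = hscale 2 (hom (midpt A D))"
    "\<phi> (1 + p, q, 2) = hscale 2 (hom (midpt B D))"
    "\<phi> (p, 1 + q, 2) = hscale 2 (hom (midpt C D))"
  using two unfolding \<phi>_def D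
  by (simp_all add: affine_hmap_def hscale_def hom_def midpt_def vdiff_def algebra_simps)

lemma conic_pullback_through_midpoints:
  fixes A B C D :: "'a::field pt"
  assumes two: "(2::'a) \<noteq> 0" and p: "p \<noteq> 0" and q: "q \<noteq> 0"
    and D: "D = (fst A + p * fst (vdiff B A) + q * fst (vdiff C A),
                 snd A + p * snd (vdiff B A) + q * snd (vdiff C A))"
    and R: "passes_through R (midpoints A B C D)"
  defines "R' \<equiv> conic_pullback A (vdiff B A) (vdiff C A) R"
  shows "R' = cscale (fst (snd (snd R'))) (normal_conic p q)"
proof (rule conic_through_normal_midpoints[OF two p q])
  have "qf R (hom (midpt A B)) = 0" "qf R (hom (midpt A C)) = 0" "qf R (hom (midpt B C)) = 0"
    "qf R (hom (midpt A D)) = 0" "qf R (hom (midpt B D)) = 0" "qf R (hom (midpt C D)) = 0"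
    using R unfolding passes_through_def midpoints_def by auto
  then show "qf R' (1, 0, 2) = 0" "qf R' (0, 1, 2) = 0" "qf R' (1, 1, 2) = 0" "qf R' (p, q, 2) = 0"
    "qf R' (1 + p, q, 2) = 0" "qf R' (p, 1 + q, 2) = 0"
    unfolding R'_def qf_conic_pullback affine_hmap_midpoints[OF two D] qf_hscale by simp_all
qed

lemma conics_through_midpoints_proportional:
  fixes A B C D :: "'a::field pt"
  assumes two: "(2::'a) \<noteq> 0" and p: "p \<noteq> 0" and q: "q \<noteq> 0"
    and D: "D = (fst A + p * fst (vdiff B A) + q * fst (vdiff C A),
                 snd A + p * snd (vdiff B A) + q * snd (vdiff C A))"
    and frame: "det2 (vdiff B A) (vdiff C A) \<noteq> 0"
    and R: "passes_through R (midpoints A B C D)" and "qf R (hom A) \<noteq> 0"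
    and R': "passes_through R' (midpoints A B C D)"
  shows "\<exists>k. R' = cscale k R"
proof -
  let ?\<phi> = "affine_hmap A (vdiff B A) (vdiff C A)"
  let ?pull = "conic_pullback A (vdiff B A) (vdiff C A)"
  define c where "c = fst (snd (snd (?pull R)))"
  define c' where "c' = fst (snd (snd (?pull R')))"
  have E: "?pull R = cscale c (normal_conic p q)"
    using conic_pullback_through_midpoints[OF two p q D R] by (simp add: c_def)
  have E': "?pull R' = cscale c' (normal_conic p q)"
    using conic_pullback_through_midpoints[OF two p q D R'] by (simp add: c'_def)
  have "c = qf R (hom A)"
    by (cases R) (simp add: c_def conic_pullback_def qf_def hom_def power2_eq_square)
  then have "c \<noteq> 0" using assms(7) by simp
  have "qf R' Y = qf (cscale (c' / c) R) Y" for Y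
  proof -
    obtain Z where Z: "?\<phi> Z = Y" using affine_hmap_surj[OF frame] by blast
    have "qf R' Y = c' * qf (normal_conic p q) Z"
      using Z E' by (metis qf_cscale qf_conic_pullback)
    also have "\<dots> = (c' / c) * (c * qf (normal_conic p q) Z)" using \<open>c \<noteq> 0\<close> by simp
    also have "c * qf (normal_conic p q) Z = qf R Y"
      using Z E by (metis qf_cscale qf_conic_pullback)
    finally show ?thesis by (simp add: qf_cscale)
  qed
  then show ?thesis using conic_eqI by blast
qed

section \<open>Bisectors of a quadrangle\<close>

definition opp_line_pairs :: "'a::field pt \<Rightarrow> 'a pt \<Rightarrow> 'a pt \<Rightarrow> 'a pt \<Rightarrow> 'a line_pair set" where
  "opp_line_pairs A B C D = {(A, B, C, D), (A, C, B, D), (A, D, B, C)}"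

lemma opp_pairs_eq_side_lines: "opp_pairs A B C D = side_lines ` opp_line_pairs A B C D"
  by (simp add: opp_pairs_def opp_line_pairs_def)

lemma transversal_to_one_of_two:
  assumes "v \<noteq> (0, 0)"
    and "det2 (vdiff Y X) (vdiff Y' X') \<noteq> 0" "det2 (vdiff Y X) (vdiff W' U') \<noteq> 0"
    and "det2 (vdiff W U) (vdiff Y' X') \<noteq> 0" "det2 (vdiff W U) (vdiff W' U') \<noteq> 0"
  shows "transversal v (X, Y, U, W) \<or> transversal v (X', Y', U', W')"
  using assms(2-5) det2_eq_0_trans[OF _ _ assms(1)] unfolding transversal.simps by metis

lemma bisector_conic_if_two_mid_defects_vanish:
  assumes v: "v \<noteq> (0, 0)" and "t \<in> opp_line_pairs A B C D" "t' \<in> opp_line_pairs A B C D"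
    and "t \<noteq> t'" "mid_defect M v t = 0" "mid_defect M v t' = 0"
  shows "qf (bisector_conic A B C D) (hom M) = 0"
proof -
  have "mid_defect M v (A, B, C, D) = 0" "mid_defect M v (A, C, B, D) = 0"
    using assms(2-) mid_defect_three_pairs[of M v A B C D] unfolding opp_line_pairs_def
    by (auto simp del: mid_defect.simps)
  then show ?thesis
    unfolding qf_bisector_conic mid_defect_eq_dot_defect_vec
    by (rule dot_eq_0_imp_det2_eq_0[OF _ _ v])
qed

lemma bisector_conic_imp_mid_defects_vanish:
  assumes "qf (bisector_conic A B C D) (hom M) = 0"
  obtains v where "v \<noteq> (0, 0)" "\<And>t. t \<in> opp_line_pairs A B C D \<Longrightarrow> mid_defect M v t = 0"
proof -
  have "det2 (defect_vec (hom M) (A, B, C, D)) (defect_vec (hom M) (A, C, B, D)) = 0"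
    using assms by (simp add: qf_bisector_conic)
  then obtain v where v: "v \<noteq> (0, 0)"
    and "mid_defect M v (A, B, C, D) = 0" "mid_defect M v (A, C, B, D) = 0"
    unfolding mid_defect_eq_dot_defect_vec by (rule det2_eq_0_imp_common_orthogonal)
  moreover from this(2,3) have "mid_defect M v (A, D, B, C) = 0"
    using mid_defect_three_pairs[of M v A B C D] by simp
  ultimately have "mid_defect M v t = 0" if "t \<in> opp_line_pairs A B C D" for t
    using that unfolding opp_line_pairs_def by blast
  then show ?thesis by (rule that[OF v])
qed

lemma proj_eq_homD: "proj_eq (hom a) (hom b) \<Longrightarrow> a = b"
  by (auto simp: proj_eq_def hom_def hscale_def prod_eq_iff)

lemma not_proj_eq_hom_if_at_infinity: "snd (snd Z) = 0 \<Longrightarrow> \<not> proj_eq Z (hom b)"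
  by (cases Z) (auto simp: proj_eq_def hom_def hscale_def)

lemma proj_eq_hom_refl: "proj_eq (hom a) (hom a)"
  unfolding proj_eq_def hom_def hscale_def by (intro conjI exI[of _ 1]) simp_all

lemma proj_eq_hom_dehomogenize:
  assumes "snd (snd X) \<noteq> 0"
  shows "proj_eq (hom (fst X / snd (snd X), fst (snd X) / snd (snd X))) X"
  unfolding proj_eq_def using assms
  by (intro conjI exI[of _ "snd (snd X)"]) (auto simp: hom_def hscale_def prod_eq_iff)

context
  fixes A B C D :: "'a::field pt"
  assumes two: "(2::'a) \<noteq> 0" and quad: "quadrangle A B C D"
begin

lemma quadrangle_distinct: "A \<noteq> B" "A \<noteq> C" "A \<noteq> D" "B \<noteq> C" "B \<noteq> D" "C \<noteq> D"
  using quad by (auto simp: quadrangle_def)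

lemma quadrangle_det2_neq_0:
  assumes "P \<in> {A, B, C, D}" "Q \<in> {A, B, C, D}" "R \<in> {A, B, C, D}" "distinct [P, Q, R]"
  shows "det2 (vdiff Q P) (vdiff R P) \<noteq> 0" "det2 (vdiff P Q) (vdiff R P) \<noteq> 0"
    "det2 (vdiff Q P) (vdiff P R) \<noteq> 0" "det2 (vdiff P Q) (vdiff P R) \<noteq> 0"
proof -
  have "\<not> collinear3 P Q R"
    using assms quad unfolding quadrangle_def by (auto simp: collinear3_swap)
  then show "det2 (vdiff Q P) (vdiff R P) \<noteq> 0" "det2 (vdiff P Q) (vdiff R P) \<noteq> 0"
    "det2 (vdiff Q P) (vdiff P R) \<noteq> 0" "det2 (vdiff P Q) (vdiff P R) \<noteq> 0"
    using not_collinear3_imp_det2_neq_0[of P Q R] assms(4) by simp_all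
qed

lemma proper_pair_opp: "t \<in> opp_line_pairs A B C D \<Longrightarrow> proper_pair t"
  using quadrangle_distinct by (auto simp: opp_line_pairs_def)

text \<open>Sides of different pairs meet at a vertex, so a direction is parallel to a side of at most
  one pair.\<close>

lemma exists_other_transversal:
  assumes v: "v \<noteq> (0, 0)" and t: "t \<in> opp_line_pairs A B C D"
  obtains t' where "t' \<in> opp_line_pairs A B C D" "t' \<noteq> t" "transversal v t'"
proof -
  note dist = quadrangle_distinct
  have T12: "transversal v (A, B, C, D) \<or> transversal v (A, C, B, D)"
    by (rule transversal_to_one_of_two[OF v]) (use dist quadrangle_det2_neq_0 in auto)
  have T13: "transversal v (A, B, C, D) \<or> transversal v (A, D, B, C)"
    by (rule transversal_to_one_of_two[OF v]) (use dist quadrangle_det2_neq_0 in auto)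
  have T23: "transversal v (A, C, B, D) \<or> transversal v (A, D, B, C)"
    by (rule transversal_to_one_of_two[OF v]) (use dist quadrangle_det2_neq_0 in auto)
  have opp: "(A, B, C, D) \<in> opp_line_pairs A B C D" "(A, C, B, D) \<in> opp_line_pairs A B C D"
    "(A, D, B, C) \<in> opp_line_pairs A B C D"
    by (simp_all add: opp_line_pairs_def)
  have ne: "(A, B, C, D) \<noteq> (A, C, B, D)" "(A, B, C, D) \<noteq> (A, D, B, C)" "(A, C, B, D) \<noteq> (A, D, B, C)"
    using dist by simp_all
  from t consider "t = (A, B, C, D)" | "t = (A, C, B, D)" | "t = (A, D, B, C)"
    unfolding opp_line_pairs_def by blast
  then show ?thesis
  proof cases
    case 1
    then show ?thesis using T23 that opp ne by metis
  next
    case 2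
    then show ?thesis using T13 that opp ne by metis
  next
    case 3
    then show ?thesis using T12 that opp ne by metis
  qed
qed

lemma bisector_midpoint:
  assumes bis: "bisects A B C D (pline M0 v)" and v: "v \<noteq> (0, 0)"
    and t: "t \<in> opp_line_pairs A B C D" and cr: "crosses (pline M0 v) (side_lines t)"
  obtains M t' where "t' \<in> opp_line_pairs A B C D" "t' \<noteq> t"
    "mid_of (pline M0 v) (side_lines t) = hom M" "mid_defect M v t = 0" "mid_defect M v t' = 0"
proof -
  let ?l = "pline M0 v"
  have same_mid: "proj_eq (mid_of ?l (side_lines s)) (mid_of ?l (side_lines s'))"
    if "s \<in> opp_line_pairs A B C D" "s' \<in> opp_line_pairs A B C D"
      "crosses ?l (side_lines s)" "crosses ?l (side_lines s')" for s s'
    using bis that unfolding bisects_def opp_pairs_eq_side_lines by blast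
  obtain t' where t': "t' \<in> opp_line_pairs A B C D" "t' \<noteq> t" "transversal v t'"
    using exists_other_transversal[OF v t] .
  have cr': "crosses ?l (side_lines t')"
    using transversal_imp_crosses[OF proper_pair_opp v] t' by blast
  have mid': "mid_of ?l (side_lines t') = hom (line_point M0 v (mid_param M0 v t'))"
    using mid_of_transversal[OF two proper_pair_opp v] t' by blast
  txt \<open>Otherwise the midpoint for \<open>t\<close> would be at infinity, but the one for \<open>t'\<close> is not.\<close>
  have tr: "transversal v t"
  proof (rule ccontr)
    assume "\<not> transversal v t"
    then have "snd (snd (mid_of ?l (side_lines t))) = 0"
      using mid_of_not_transversal[OF proper_pair_opp[OF t] v cr] by blast
    then show False
      using same_mid[OF t t'(1) cr cr'] mid' not_proj_eq_hom_if_at_infinity by metis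
  qed
  define M where "M = line_point M0 v (mid_param M0 v t)"
  have mid: "mid_of ?l (side_lines t) = hom M"
    unfolding M_def using mid_of_transversal[OF two proper_pair_opp[OF t] v tr] .
  have "line_point M0 v (mid_param M0 v t') = M"
    using same_mid[OF t t'(1) cr cr'] mid mid' proj_eq_homD by metis
  then have "mid_defect M v t' = 0" using mid_defect_at_mid_param[OF two t'(3)] by metis
  moreover have "mid_defect M v t = 0" unfolding M_def using mid_defect_at_mid_param[OF two tr] .
  ultimately show ?thesis using that t' mid by blast
qed

lemma bisector_locus_subset:
  "bisector_locus A B C D \<subseteq> {X. qf (bisector_conic A B C D) X = 0 \<and> snd (snd X) \<noteq> 0}"
proof
  fix X assume "X \<in> bisector_locus A B C D"
  then obtain l t where bis: "bisects A B C D l" and t: "t \<in> opp_line_pairs A B C D"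
    and cr: "crosses l (side_lines t)" and pe: "proj_eq (mid_of l (side_lines t)) X"
    unfolding bisector_locus_def opp_pairs_eq_side_lines by blast
  have "is_line l" using bis by (simp add: bisects_def)
  then obtain M0 v where v: "v \<noteq> (0, 0)" and l: "l = pline M0 v"
    by (rule is_line_obtain_pline)
  obtain M t' where t': "t' \<in> opp_line_pairs A B C D" "t' \<noteq> t"
    and mid: "mid_of (pline M0 v) (side_lines t) = hom M"
    and D: "mid_defect M v t = 0" "mid_defect M v t' = 0"
    by (rule bisector_midpoint[OF bis[unfolded l] v t cr[unfolded l]])
  have on_conic: "qf (bisector_conic A B C D) (hom M) = 0"
    using bisector_conic_if_two_mid_defects_vanish[OF v t t'(1) t'(2)[symmetric] D] .
  obtain k where k: "k \<noteq> 0" "X = hscale k (hom M)"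
    using pe unfolding l mid proj_eq_def by blast
  have "qf (bisector_conic A B C D) X = 0" using on_conic by (simp add: k(2) qf_hscale)
  moreover have "snd (snd X) \<noteq> 0" using k by (simp add: hscale_def hom_def)
  ultimately show "X \<in> {X. qf (bisector_conic A B C D) X = 0 \<and> snd (snd X) \<noteq> 0}" by simp
qed

lemma bisects_pline_if_mid_defects_vanish:
  assumes v: "v \<noteq> (0, 0)" and D: "\<And>t. t \<in> opp_line_pairs A B C D \<Longrightarrow> mid_defect M v t = 0"
  shows "bisects A B C D (pline M v)"
proof -
  have mid: "mid_of (pline M v) (side_lines t) = hom M"
    if "t \<in> opp_line_pairs A B C D" "crosses (pline M v) (side_lines t)" for t
    using mid_of_eq_hom_if_mid_defect_eq_0[OF two proper_pair_opp v] D that by blast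
  show ?thesis
    unfolding bisects_def opp_pairs_eq_side_lines
  proof (intro conjI ballI impI)
    show "is_line (pline M v)" using is_line_pline[OF v] .
    fix P P' assume "P \<in> side_lines ` opp_line_pairs A B C D" "P' \<in> side_lines ` opp_line_pairs A B C D"
      and "crosses (pline M v) P \<and> crosses (pline M v) P'"
    then have "mid_of (pline M v) P = hom M" "mid_of (pline M v) P' = hom M"
      using mid by blast+
    then show "proj_eq (mid_of (pline M v) P) (mid_of (pline M v) P')"
      using proj_eq_hom_refl by simp
  qed
qed

lemma bisector_conic_affine_subset:
  "{X. qf (bisector_conic A B C D) X = 0 \<and> snd (snd X) \<noteq> 0} \<subseteq> bisector_locus A B C D"
proof
  fix X assume "X \<in> {X. qf (bisector_conic A B C D) X = 0 \<and> snd (snd X) \<noteq> 0}"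
  then have q: "qf (bisector_conic A B C D) X = 0" and z: "snd (snd X) \<noteq> 0" by simp_all
  define M where "M = (fst X / snd (snd X), fst (snd X) / snd (snd X))"
  have pe: "proj_eq (hom M) X" unfolding M_def by (rule proj_eq_hom_dehomogenize[OF z])
  then obtain k where "k \<noteq> 0" "X = hscale k (hom M)" by (auto simp: proj_eq_def)
  then have "qf (bisector_conic A B C D) (hom M) = 0" using q by (simp add: qf_hscale)
  then obtain v where v: "v \<noteq> (0, 0)"
    and D: "\<And>t. t \<in> opp_line_pairs A B C D \<Longrightarrow> mid_defect M v t = 0"
    by (rule bisector_conic_imp_mid_defects_vanish) blast
  have "(A, B, C, D) \<in> opp_line_pairs A B C D" by (simp add: opp_line_pairs_def)
  then obtain t where t: "t \<in> opp_line_pairs A B C D" "transversal v t"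
    using exists_other_transversal[OF v] by blast
  have cr: "crosses (pline M v) (side_lines t)"
    using transversal_imp_crosses[OF proper_pair_opp v] t by blast
  have "mid_of (pline M v) (side_lines t) = hom M"
    using mid_of_eq_hom_if_mid_defect_eq_0[OF two proper_pair_opp v cr D] t by blast
  then have "proj_eq (mid_of (pline M v) (side_lines t)) X" using pe by simp
  then show "X \<in> bisector_locus A B C D"
    unfolding bisector_locus_def opp_pairs_eq_side_lines
    using bisects_pline_if_mid_defects_vanish[OF v D] t(1) cr by blast
qed

lemma qf_bisector_conic_vertex_neq_0: "qf (bisector_conic A B C D) (hom A) \<noteq> 0"
  unfolding qf_bisector_conic_vertex using quadrangle_distinct quadrangle_det2_neq_0 by simp

lemma bisector_conic_through_nine_points:
  "passes_through (bisector_conic A B C D) (diagonal_points A B C D \<union> midpoints A B C D)"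
proof -
  note dist = quadrangle_distinct and det = quadrangle_det2_neq_0
  have "det2 (vdiff D C) (vdiff A C) \<noteq> 0" "det2 (vdiff D B) (vdiff A B) \<noteq> 0"
    "det2 (vdiff C B) (vdiff A B) \<noteq> 0"
    using dist det by simp_all
  then have "qf (bisector_conic A B C D) (meet (line_through A B) (line_through C D)) = 0"
    "qf (bisector_conic A B C D) (meet (line_through A C) (line_through B D)) = 0"
    "qf (bisector_conic A B C D) (meet (line_through A D) (line_through B C)) = 0"
    using bisector_conic_on_side_pairs meet_on_both_lines[OF dist(1) dist(6)]
      meet_on_both_lines[OF dist(2) dist(5)] meet_on_both_lines[OF dist(3) dist(4)]
    by blast+
  then show ?thesis
    unfolding passes_through_def diagonal_points_def opp_pairs_def midpoints_def
    using bisector_conic_midpt[OF two, of A B C D] by auto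
qed

lemma obtain_frame_coords:
  obtains p q where "p \<noteq> 0" "q \<noteq> 0"
    "D = (fst A + p * fst (vdiff B A) + q * fst (vdiff C A),
          snd A + p * snd (vdiff B A) + q * snd (vdiff C A))"
proof -
  let ?u = "vdiff B A" and ?w = "vdiff C A" and ?d = "vdiff D A"
  define p where "p = det2 ?d ?w / det2 ?u ?w"
  define q where "q = det2 ?u ?d / det2 ?u ?w"
  have frame: "det2 ?u ?w \<noteq> 0" using quadrangle_distinct quadrangle_det2_neq_0 by simp
  have "fst ?u * det2 ?d ?w + fst ?w * det2 ?u ?d = (fst D - fst A) * det2 ?u ?w"
    "snd ?u * det2 ?d ?w + snd ?w * det2 ?u ?d = (snd D - snd A) * det2 ?u ?w"
    unfolding det2_def vdiff_def by (simp; algebra)+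
  then have "p * fst ?u + q * fst ?w = fst D - fst A" "p * snd ?u + q * snd ?w = snd D - snd A"
    using frame unfolding p_def q_def by (simp_all add: field_simps)
  then have "D = (fst A + p * fst ?u + q * fst ?w, snd A + p * snd ?u + q * snd ?w)"
    by (simp add: prod_eq_iff algebra_simps)
  moreover have "p \<noteq> 0" "q \<noteq> 0"
    using quadrangle_distinct quadrangle_det2_neq_0 frame by (simp_all add: p_def q_def)
  ultimately show ?thesis using that by blast
qed

lemma is_nine_point_conic_bisector_conic: "is_nine_point_conic A B C D (bisector_conic A B C D)"
proof -
  obtain p q where p: "p \<noteq> 0" and q: "q \<noteq> 0"
    and D: "D = (fst A + p * fst (vdiff B A) + q * fst (vdiff C A),
                 snd A + p * snd (vdiff B A) + q * snd (vdiff C A))"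
    by (rule obtain_frame_coords)
  have frame: "det2 (vdiff B A) (vdiff C A) \<noteq> 0"
    using quadrangle_distinct quadrangle_det2_neq_0 by simp
  have "bisector_conic A B C D \<noteq> (0, 0, 0, 0, 0, 0)"
    using qf_bisector_conic_vertex_neq_0 by (auto simp: qf_def hom_def)
  moreover have "\<exists>k. Q' = cscale k (bisector_conic A B C D)"
    if "passes_through Q' (diagonal_points A B C D \<union> midpoints A B C D)" for Q'
    using conics_through_midpoints_proportional[OF two p q D frame _ qf_bisector_conic_vertex_neq_0]
      that bisector_conic_through_nine_points by (simp add: passes_through_def)
  ultimately show ?thesis
    unfolding is_nine_point_conic_def using bisector_conic_through_nine_points by blast
qed

end

theorem corollary5p3:
  fixes A B C D :: "'a::field pt"
  assumes char: "(2::'a) \<noteq> 0"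
    and quad: "quadrangle A B C D"
  shows "\<exists>Q. is_nine_point_conic A B C D Q \<and>
             bisector_locus A B C D = {X. qf Q X = 0 \<and> snd (snd X) \<noteq> 0}"
proof (intro exI conjI)
  show "is_nine_point_conic A B C D (bisector_conic A B C D)"
    using is_nine_point_conic_bisector_conic[OF char quad] .
  show "bisector_locus A B C D = {X. qf (bisector_conic A B C D) X = 0 \<and> snd (snd X) \<noteq> 0}"
    using bisector_locus_subset[OF char quad] bisector_conic_affine_subset[OF char quad] by blast
qed

end
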